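(* Let $f:\mathbb{R}^n\to\mathbb{R}$ be a continuous loss function which is $\mu$-strongly convex and $L$-smooth, with global minimum $w^*$. Then every sequence $(w_i)$ generated by the Loss-Guarded L2O algorithm using deterministic gradient descent with step size $\frac{\alpha}{L}$, $\alpha\in\,]0,\min(2,2\mu L)[$, as the guarding mechanism converges to $w^*$: $\lim_{i\to\infty}w_i=w^*$.
   Context: Loss-Guarded L2O algorithm with deterministic gradient descent: at each step $i$, an arbitrary black-box rule proposes a point $y_i$, the fallback proposes $z_i=w_i-\frac{\alpha}{L}\nabla f(w_i)$, and $w_{i+1}=y_i$ if $f(y_i)<f(z_i)$, otherwise $w_{i+1}=z_i$. $L$-smooth: $f(y)\le f(x)+\langle\nabla f(x),y-x\rangle+\frac{L}{2}\|y-x\|_2^2$; $\mu$-strongly convex: $f(y)\ge f(x)+\langle\nabla f(x),y-x\rangle+\frac{\mu}{2}\|y-x\|_2^2$, for all $x,y$. *)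

theory Defs
  imports "HOL-Analysis.Analysis"
begin

definition is_gradient :: "('a::real_inner \<Rightarrow> real) \<Rightarrow> ('a \<Rightarrow> 'a) \<Rightarrow> bool" where
  "is_gradient f grad \<longleftrightarrow> (\<forall>x. (f has_derivative (\<lambda>h. grad x \<bullet> h)) (at x))"

definition L_smooth :: "real \<Rightarrow> ('a::real_inner \<Rightarrow> real) \<Rightarrow> ('a \<Rightarrow> 'a) \<Rightarrow> bool" where
  "L_smooth L f grad \<longleftrightarrow>
     (\<forall>x y. f y \<le> f x + grad x \<bullet> (y - x) + L / 2 * (norm (y - x))\<^sup>2)"

definition mu_strongly_convex :: "real \<Rightarrow> ('a::real_inner \<Rightarrow> real) \<Rightarrow> ('a \<Rightarrow> 'a) \<Rightarrow> bool" where
  "mu_strongly_convex \<mu> f grad \<longleftrightarrow>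
     (\<forall>x y. f y \<ge> f x + grad x \<bullet> (y - x) + \<mu> / 2 * (norm (y - x))\<^sup>2)"

text \<open>Loss-Guarded L2O with deterministic gradient descent fallback:
  y is the arbitrary black-box proposal sequence, w the generated iterates.\<close>
definition loss_guarded_l2o_seq ::
  "('a::real_inner \<Rightarrow> real) \<Rightarrow> ('a \<Rightarrow> 'a) \<Rightarrow> real \<Rightarrow> real \<Rightarrow> (nat \<Rightarrow> 'a) \<Rightarrow> (nat \<Rightarrow> 'a) \<Rightarrow> bool" where
  "loss_guarded_l2o_seq f grad \<alpha> L y w \<longleftrightarrow>
     (\<forall>i. let z = w i - (\<alpha> / L) *\<^sub>R grad (w i)
          in w (Suc i) = (if f (y i) < f z then y i else z))"

end

theory Submission
  imports Defs
begin

text \<open>A gradient step with factor \<open>\<alpha>/L\<close> decreases f by at least a fixed multiple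
  \<open>c = (\<alpha>/L)(1 - \<alpha>/2)\<close> of the squared gradient (smoothness), and strong convexity yields the
  Polyak-Lojasiewicz inequality \<open>2\<mu>(f x - f w\<^sup>*) \<le> |\<nabla>f x|\<^sup>2\<close>. The loss guard never accepts a point
  worse than the gradient step, so the optimality gap contracts by the factor \<open>1 - 2\<mu>c\<close> at each
  iteration and tends to 0; quadratic growth around \<open>w\<^sup>*\<close>, where the gradient vanishes, then turns
  convergence of the losses into convergence of the iterates.\<close>

lemma inner_add_half_norm_sq_ge:
  fixes g d :: "'a::real_inner" and \<mu> :: real
  assumes "\<mu> > 0"
  shows "g \<bullet> d + \<mu> / 2 * (norm d)\<^sup>2 \<ge> - (norm g)\<^sup>2 / (2 * \<mu>)"
proof -
  have "0 \<le> (norm (g + \<mu> *\<^sub>R d))\<^sup>2" by simp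
  also have "\<dots> = (norm g)\<^sup>2 + 2 * \<mu> * (g \<bullet> d) + \<mu>\<^sup>2 * (norm d)\<^sup>2"
    unfolding power2_norm_eq_inner
    by (simp add: inner_add_left inner_add_right inner_commute algebra_simps power2_eq_square)
  also have "\<dots> = 2 * \<mu> * ((norm g)\<^sup>2 / (2 * \<mu>) + (g \<bullet> d + \<mu> / 2 * (norm d)\<^sup>2))"
    using assms by (simp add: field_simps power2_eq_square)
  finally show ?thesis
    using assms by (simp add: zero_le_mult_iff)
qed

lemma L_smooth_gradient_step:
  fixes f :: "'a::real_inner \<Rightarrow> real"
  assumes "L_smooth L f grad" and "L > 0"
  shows "f (x - (\<alpha> / L) *\<^sub>R grad x) \<le> f x - \<alpha> / L * (1 - \<alpha> / 2) * (norm (grad x))\<^sup>2"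
proof -
  let ?d = "- ((\<alpha> / L) *\<^sub>R grad x)"
  have "f (x - (\<alpha> / L) *\<^sub>R grad x) \<le> f x + grad x \<bullet> ?d + L / 2 * (norm ?d)\<^sup>2"
    using assms(1) unfolding L_smooth_def by (metis diff_conv_add_uminus add_diff_cancel_left')
  also have "grad x \<bullet> ?d = - (\<alpha> / L) * (norm (grad x))\<^sup>2"
    by (simp add: power2_norm_eq_inner)
  also have "L / 2 * (norm ?d)\<^sup>2 = \<alpha>\<^sup>2 / (2 * L) * (norm (grad x))\<^sup>2"
    using assms(2) by (simp add: power_mult_distrib power2_eq_square field_simps)
  also have "f x + - (\<alpha> / L) * (norm (grad x))\<^sup>2 + \<alpha>\<^sup>2 / (2 * L) * (norm (grad x))\<^sup>2
      = f x - \<alpha> / L * (1 - \<alpha> / 2) * (norm (grad x))\<^sup>2"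
    using assms(2) by (simp add: field_simps power2_eq_square)
  finally show ?thesis .
qed

lemma L_smooth_minimizer_gradient_zero:
  fixes f :: "'a::real_inner \<Rightarrow> real"
  assumes "L_smooth L f grad" and "L > 0" and "\<And>v. f wstar \<le> f v"
  shows "grad wstar = 0"
proof -
  have "f wstar \<le> f (wstar - (1 / L) *\<^sub>R grad wstar)" by (rule assms(3))
  also have "\<dots> \<le> f wstar - 1 / L * (1 - 1 / 2) * (norm (grad wstar))\<^sup>2"
    by (rule L_smooth_gradient_step[OF assms(1,2)])
  finally have "(norm (grad wstar))\<^sup>2 / (2 * L) \<le> 0" by simp
  then show ?thesis
    using assms(2) by (simp add: divide_le_0_iff)
qed

lemma strongly_convex_gradient_dominance:
  fixes f :: "'a::real_inner \<Rightarrow> real"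
  assumes "mu_strongly_convex \<mu> f grad" and "\<mu> > 0" and "\<And>v. f wstar \<le> f v"
  shows "2 * \<mu> * (f x - f wstar) \<le> (norm (grad x))\<^sup>2"
proof -
  have "f wstar \<ge> f x + (grad x \<bullet> (wstar - x) + \<mu> / 2 * (norm (wstar - x))\<^sup>2)"
    using assms(1) unfolding mu_strongly_convex_def by (simp add: add.assoc)
  moreover have "grad x \<bullet> (wstar - x) + \<mu> / 2 * (norm (wstar - x))\<^sup>2 \<ge> - (norm (grad x))\<^sup>2 / (2 * \<mu>)"
    by (rule inner_add_half_norm_sq_ge[OF assms(2)])
  ultimately have "f x - f wstar \<le> (norm (grad x))\<^sup>2 / (2 * \<mu>)" by linarith
  then show ?thesis
    using assms(2) by (simp add: field_simps)
qed

lemma strongly_convex_quadratic_growth: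
  fixes f :: "'a::real_inner \<Rightarrow> real"
  assumes "mu_strongly_convex \<mu> f grad" and "grad wstar = 0"
  shows "\<mu> / 2 * (norm (x - wstar))\<^sup>2 \<le> f x - f wstar"
  using assms unfolding mu_strongly_convex_def by (metis add.commute add_0 inner_zero_left le_diff_eq)

lemma strongly_convex_tendsto_minimizer:
  fixes f :: "'a::real_inner \<Rightarrow> real" and w :: "nat \<Rightarrow> 'a"
  assumes "mu_strongly_convex \<mu> f grad" and "\<mu> > 0" and "grad wstar = 0"
    and "(\<lambda>i. f (w i)) \<longlonglongrightarrow> f wstar"
  shows "w \<longlonglongrightarrow> wstar"
proof -
  have "(\<lambda>i. sqrt (2 / \<mu> * (f (w i) - f wstar))) \<longlonglongrightarrow> sqrt (2 / \<mu> * (f wstar - f wstar))"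
    by (intro tendsto_intros assms(4))
  then have gap: "(\<lambda>i. sqrt (2 / \<mu> * (f (w i) - f wstar))) \<longlonglongrightarrow> 0" by simp
  have "norm (w i - wstar) \<le> sqrt (2 / \<mu> * (f (w i) - f wstar))" for i
  proof (rule real_le_rsqrt)
    show "(norm (w i - wstar))\<^sup>2 \<le> 2 / \<mu> * (f (w i) - f wstar)"
      using strongly_convex_quadratic_growth[OF assms(1,3), of "w i"] assms(2)
      by (simp add: field_simps)
  qed
  then have "(\<lambda>i. norm (w i - wstar)) \<longlonglongrightarrow> 0"
    by (intro tendsto_sandwich[OF _ _ tendsto_const gap]) auto
  then show ?thesis
    by (simp add: LIM_zero_iff tendsto_norm_zero_iff)
qed

lemma LIMSEQ_zero_of_contraction:
  fixes e :: "nat \<Rightarrow> real"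
  assumes "\<And>i. 0 \<le> e i" and "\<And>i. e (Suc i) \<le> q * e i" and "q < 1"
  shows "e \<longlonglongrightarrow> 0"
proof -
  define r where "r = max 0 q"
  have r: "0 \<le> r" "r < 1" using assms(3) unfolding r_def by auto
  have "e (Suc i) \<le> r * e i" for i
    using assms(2)[of i] mult_right_mono[OF max.cobounded2[of q 0] assms(1)[of i]]
    unfolding r_def by linarith
  then have bound: "e i \<le> r ^ i * e 0" for i
  proof (induction i)
    case (Suc i)
    have "e (Suc i) \<le> r * e i" by (rule Suc.prems)
    also have "\<dots> \<le> r * (r ^ i * e 0)"
      using Suc r(1) by (intro mult_left_mono) auto
    finally show ?case by simp
  qed simp
  have "(\<lambda>i. r ^ i * e 0) \<longlonglongrightarrow> 0"
    by (rule tendsto_mult_left_zero[OF LIMSEQ_power_zero]) (use r in simp)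
  then show ?thesis
    by (rule tendsto_sandwich[OF _ _ tendsto_const, rotated 2]) (simp_all add: assms(1) bound)
qed

lemma loss_guarded_l2o_le_gradient_step:
  assumes "loss_guarded_l2o_seq f grad \<alpha> L y w"
  shows "f (w (Suc i)) \<le> f (w i - (\<alpha> / L) *\<^sub>R grad (w i))"
  using assms unfolding loss_guarded_l2o_seq_def Let_def
  by (metis less_le_not_le nle_le order_refl)

lemma loss_guarded_l2o_gap_contraction:
  fixes f :: "'a::real_inner \<Rightarrow> real"
  assumes "loss_guarded_l2o_seq f grad \<alpha> L y w"
    and "L_smooth L f grad" and "L > 0"
    and "mu_strongly_convex \<mu> f grad" and "\<mu> > 0" and "\<And>v. f wstar \<le> f v"
    and "0 \<le> \<alpha>" and "\<alpha> \<le> 2"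
  shows "f (w (Suc i)) - f wstar \<le> (1 - 2 * \<mu> * (\<alpha> / L * (1 - \<alpha> / 2))) * (f (w i) - f wstar)"
proof -
  define c where "c = \<alpha> / L * (1 - \<alpha> / 2)"
  have "c \<ge> 0" using assms(3,7,8) unfolding c_def by simp
  have "f (w (Suc i)) \<le> f (w i - (\<alpha> / L) *\<^sub>R grad (w i))"
    by (rule loss_guarded_l2o_le_gradient_step[OF assms(1)])
  also have "\<dots> \<le> f (w i) - c * (norm (grad (w i)))\<^sup>2"
    unfolding c_def by (rule L_smooth_gradient_step[OF assms(2,3)])
  also have "\<dots> \<le> f (w i) - c * (2 * \<mu> * (f (w i) - f wstar))"
    using strongly_convex_gradient_dominance[OF assms(4,5,6)] \<open>c \<ge> 0\<close>
    by (simp add: mult_left_mono)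
  finally have "f (w (Suc i)) - f wstar \<le> (1 - 2 * \<mu> * c) * (f (w i) - f wstar)"
    by (simp add: algebra_simps)
  then show ?thesis
    unfolding c_def .
qed

theorem theorem3:
  fixes f :: "real ^ 'n \<Rightarrow> real" and grad :: "real ^ 'n \<Rightarrow> real ^ 'n"
    and \<mu> L \<alpha> :: real and wstar :: "real ^ 'n"
    and y w :: "nat \<Rightarrow> real ^ 'n"
  assumes "continuous_on UNIV f"
    and "is_gradient f grad"
    and "\<mu> > 0" and "L > 0"
    and "mu_strongly_convex \<mu> f grad"
    and "L_smooth L f grad"
    and "\<forall>v. f wstar \<le> f v"
    and "0 < \<alpha>" and "\<alpha> < min 2 (2 * \<mu> * L)"
    and "loss_guarded_l2o_seq f grad \<alpha> L y w"
  shows "w \<longlonglongrightarrow> wstar"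
proof -
  have min: "\<And>v. f wstar \<le> f v" using assms(7) by blast
  have "\<alpha> < 2" using assms(9) by simp
  let ?q = "1 - 2 * \<mu> * (\<alpha> / L * (1 - \<alpha> / 2))"
  have "?q < 1" using assms(3,4,8) \<open>\<alpha> < 2\<close> by simp
  have "grad wstar = 0"
    by (rule L_smooth_minimizer_gradient_zero[OF assms(6,4) min])
  moreover have "(\<lambda>i. f (w i) - f wstar) \<longlonglongrightarrow> 0"
  proof (rule LIMSEQ_zero_of_contraction)
    show "\<And>i. 0 \<le> f (w i) - f wstar" using min by simp
    show "\<And>i. f (w (Suc i)) - f wstar \<le> ?q * (f (w i) - f wstar)"
      using loss_guarded_l2o_gap_contraction[OF assms(10,6,4,5,3) min] assms(8) \<open>\<alpha> < 2\<close>
      by simp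
  qed (fact \<open>?q < 1\<close>)
  then have "(\<lambda>i. f (w i)) \<longlonglongrightarrow> f wstar"
    by (simp add: LIM_zero_iff)
  ultimately show ?thesis
    by (rule strongly_convex_tendsto_minimizer[OF assms(5,3)])
qed

end
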